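(* Let $X$ be a real Hilbert space, $A,B\colon X\rightrightarrows X$ maximally monotone, $T:=\operatorname{Id}-J_A+J_BR_A$, $v:=P_{\overline{\operatorname{ran}}(\operatorname{Id}-T)}(0)$, $D:=\operatorname{dom}A-\operatorname{dom}B$, $R:=\operatorname{ran}A+\operatorname{ran}B$, $v_D:=P_{\overline D}(0)$, $v_R:=P_{\overline R}(0)$, and assume $\overline{\operatorname{ran}}(\operatorname{Id}-T)=\overline{D\cap R}=\overline D\cap\overline R$. Let $x\in X$. Then as $n\to\infty$: (i) $\|J_AT^nx-J_AT^{n+1}x\|^2+\|J_{A^{-1}}T^nx-J_{A^{-1}}T^{n+1}x\|^2\to\|v\|^2=\|v_D\|^2+\|v_R\|^2$; (ii) $J_AT^nx-J_AT^{n+1}x\to v_R$; (iii) $J_{A^{-1}}T^nx-J_{A^{-1}}T^{n+1}x\to v_D$.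
   Context: $J_C:=(\operatorname{Id}+C)^{-1}$, $R_C:=2J_C-\operatorname{Id}$ for maximally monotone $C$; $P_S$ is the projection onto a nonempty closed convex set $S$; convergence is in norm. *)

theory Defs
  imports "HOL-Analysis.Analysis"
begin

definition graph_op :: "('a \<Rightarrow> 'a set) \<Rightarrow> ('a \<times> 'a) set" where
  "graph_op A = {(x, u). u \<in> A x}"

definition dom_op :: "('a \<Rightarrow> 'a set) \<Rightarrow> 'a set" where
  "dom_op A = {x. A x \<noteq> {}}"

definition ran_op :: "('a \<Rightarrow> 'a set) \<Rightarrow> 'a set" where
  "ran_op A = (\<Union>x. A x)"

definition inv_op :: "('a \<Rightarrow> 'a set) \<Rightarrow> ('a \<Rightarrow> 'a set)" where
  "inv_op A = (\<lambda>u. {x. u \<in> A x})"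

definition monotone_op :: "('a::real_inner \<Rightarrow> 'a set) \<Rightarrow> bool" where
  "monotone_op A \<longleftrightarrow> (\<forall>x y u v. u \<in> A x \<longrightarrow> v \<in> A y \<longrightarrow> 0 \<le> (x - y) \<bullet> (u - v))"

definition max_monotone_op :: "('a::real_inner \<Rightarrow> 'a set) \<Rightarrow> bool" where
  "max_monotone_op A \<longleftrightarrow> monotone_op A \<and>
     (\<forall>B. monotone_op B \<longrightarrow> graph_op A \<subseteq> graph_op B \<longrightarrow> B = A)"

text \<open>Resolvent J_A = (Id + A)^{-1}; y \<in> J_A x iff x \<in> y + A y iff x - y \<in> A y.
  For maximally monotone A it is single-valued with full domain (Minty).\<close>
definition resolvent :: "('a::real_inner \<Rightarrow> 'a set) \<Rightarrow> 'a \<Rightarrow> 'a" where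
  "resolvent A x = (THE y. x - y \<in> A y)"

definition reflected_resolvent :: "('a::real_inner \<Rightarrow> 'a set) \<Rightarrow> 'a \<Rightarrow> 'a" where
  "reflected_resolvent A x = 2 *\<^sub>R resolvent A x - x"

text \<open>Metric projection onto a (nonempty closed convex) set.\<close>
definition proj :: "'a::real_inner set \<Rightarrow> 'a \<Rightarrow> 'a" where
  "proj S a = (THE p. p \<in> S \<and> (\<forall>y\<in>S. dist a p \<le> dist a y))"

end

theory Submission
  imports Defs
begin

text \<open>Write \<open>p n = J_A (T^n x) - J_A (T^(n+1) x)\<close> and
  \<open>q n = J_(A^-1) (T^n x) - J_(A^-1) (T^(n+1) x)\<close>. Their sum is the displacement
  \<open>T^n x - T^(n+1) x\<close>. Since \<open>T = (Id + R_B R_A) / 2\<close> is firmly nonexpansive, the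
  displacements along any two orbits become asymptotically equal, so their norms converge to
  \<open>norm v\<close>. Moreover \<open>p n \<in> R\<close>, \<open>q n \<in> D\<close> and \<open>p n \<bullet> q n \<ge> 0\<close> by monotonicity of \<open>A\<close>.

  A recession argument for maximally monotone operators shows that the closure of \<open>R\<close> is
  invariant under translation by \<open>vD\<close> and \<open>-vD\<close>, and the closure of \<open>D\<close> under translation by
  \<open>vR\<close>. Hence \<open>vD \<bullet> vR = 0\<close> and \<open>vD + vR \<in> closure D \<inter> closure R\<close>, so that
  \<open>|v|^2 \<le> |vD|^2 + |vR|^2\<close>. The variational inequalities of the two projections then give
  \<open>|p n - vR|^2 + |q n - vD|^2 \<le> |p n + q n|^2 - |v|^2\<close>, which tends to zero.

  Completeness enters through the existence of projections and through Minty's theorem, which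
  makes resolvents total; both come from minimizing a strongly convex function.\<close>

section \<open>Minimizers of strongly convex functions and projections\<close>

lemma tendsto_of_norm_diff_sq:
  fixes f :: "nat \<Rightarrow> 'a::real_normed_vector"
  assumes "(\<lambda>n. (norm (f n - l))\<^sup>2) \<longlonglongrightarrow> 0"
  shows "f \<longlonglongrightarrow> l"
proof -
  have "(\<lambda>n. sqrt ((norm (f n - l))\<^sup>2)) \<longlonglongrightarrow> sqrt 0"
    by (intro tendsto_intros assms)
  then show ?thesis
    by (simp add: tendsto_norm_zero_iff LIM_zero_cancel)
qed

lemma nonneg_if_nonneg_quadratic_near_0:
  fixes a b :: real
  assumes "\<And>t. 0 < t \<Longrightarrow> t \<le> 1 \<Longrightarrow> 0 \<le> 2 * t * a + t\<^sup>2 * b"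
  shows "0 \<le> a"
proof (rule ccontr)
  assume a: "\<not> 0 \<le> a"
  define c where "c = - a / (2 * \<bar>b\<bar> + 1)"
  define t where "t = min 1 c"
  have d: "0 < 2 * \<bar>b\<bar> + 1" by (simp add: add_pos_nonneg)
  then have "0 < c" using a by (simp add: c_def divide_neg_pos)
  then have t: "0 < t" "t \<le> 1" by (auto simp: t_def)
  have "t * (2 * \<bar>b\<bar> + 1) \<le> c * (2 * \<bar>b\<bar> + 1)"
    using d by (intro mult_right_mono) (auto simp: t_def)
  also have "\<dots> = - a" using d by (simp add: c_def)
  finally have "t * (2 * \<bar>b\<bar> + 1) \<le> - a" .
  then have "t * \<bar>b\<bar> \<le> - a / 2" using t by (simp add: algebra_simps)
  then have "t * (t * \<bar>b\<bar>) \<le> t * (- a / 2)" using t by (intro mult_left_mono) auto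
  moreover have "t\<^sup>2 * b \<le> t * (t * \<bar>b\<bar>)"
    using t by (simp add: power2_eq_square mult.assoc mult_left_mono)
  moreover have "t * a < 0" using t a by (simp add: mult_pos_neg)
  ultimately have "2 * t * a + t\<^sup>2 * b < 0" by linarith
  then show False using assms[OF t] by simp
qed

lemma norm_midpoint_sq:
  fixes p q :: "'a::real_inner"
  shows "(norm ((1/2) *\<^sub>R (p + q)))\<^sup>2 = ((norm p)\<^sup>2 + (norm q)\<^sup>2) / 2 - (norm (p - q))\<^sup>2 / 4"
  unfolding power2_norm_eq_inner
  by (simp add: inner_add_left inner_add_right inner_diff_left inner_diff_right inner_commute
      field_simps)

lemma Cauchy_of_dist_sq_le_harmonic:
  fixes p :: "nat \<Rightarrow> 'a::metric_space"
  assumes k: "k > 0"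
    and dist_sq: "\<And>i j. (dist (p i) (p j))\<^sup>2 \<le> (1 / (real i + 1) + 1 / (real j + 1)) / (2 * k)"
  shows "Cauchy p"
proof (rule metric_CauchyI)
  fix e :: real assume e: "e > 0"
  obtain N :: nat where N: "1 / (k * e\<^sup>2) < real N" using reals_Archimedean2 by blast
  have N': "1 / (real N + 1) < k * e\<^sup>2"
  proof -
    have "0 < k * e\<^sup>2" using k e by simp
    then have "1 < (real N + 1) * (k * e\<^sup>2)" using N by (simp add: field_simps)
    then show ?thesis by (simp add: field_simps)
  qed
  have "dist (p i) (p j) < e" if "N \<le> i" "N \<le> j" for i j
  proof -
    have "1 / (real i + 1) \<le> 1 / (real N + 1)" "1 / (real j + 1) \<le> 1 / (real N + 1)"
      using that by (auto intro!: divide_left_mono)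
    then have "(1 / (real i + 1) + 1 / (real j + 1)) / (2 * k) \<le> (2 / (real N + 1)) / (2 * k)"
      using k by (intro divide_right_mono) auto
    then have "(dist (p i) (p j))\<^sup>2 \<le> (1 / (real N + 1)) / k"
      using dist_sq[of i j] by simp
    also have "\<dots> < (k * e\<^sup>2) / k" using N' k by (rule divide_strict_right_mono)
    also have "\<dots> = e\<^sup>2" using k by simp
    finally show ?thesis using e by (simp add: power_less_imp_less_base)
  qed
  then show "\<exists>M. \<forall>i\<ge>M. \<forall>j\<ge>M. dist (p i) (p j) < e" by blast
qed

text \<open>The function is given by its epigraph relation \<open>P p c\<close> (its value at \<open>p\<close> is at most \<open>c\<close>),
  so it may take the value infinity. By the midpoint inequality, minimizing sequences are Cauchy.\<close>

lemma strongly_convex_epigraph_attains_min: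
  fixes P :: "'a::{real_inner,complete_space} \<Rightarrow> real \<Rightarrow> bool"
  assumes ex: "\<exists>p c. P p c" and lb: "\<And>p c. P p c \<Longrightarrow> lo \<le> c"
    and up: "\<And>p c c'. P p c \<Longrightarrow> c \<le> c' \<Longrightarrow> P p c'"
    and mid: "\<And>p q c c'. P p c \<Longrightarrow> P q c' \<Longrightarrow>
      P ((1/2) *\<^sub>R (p + q)) ((c + c') / 2 - k * (norm (p - q))\<^sup>2)"
    and k: "k > 0"
    and closed: "\<And>p c p0 c0. (\<And>n. P (p n) (c n)) \<Longrightarrow> p \<longlonglongrightarrow> p0 \<Longrightarrow> c \<longlonglongrightarrow> c0 \<Longrightarrow> P p0 c0"
  shows "\<exists>p0 m. P p0 m \<and> (\<forall>p c. P p c \<longrightarrow> m \<le> c)"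
proof -
  define m where "m = Inf {c. \<exists>p. P p c}"
  have m_le: "m \<le> c" if "P p c" for p c
    unfolding m_def by (rule cInf_lower) (use that lb in \<open>auto simp: bdd_below_def\<close>)
  have "\<exists>q. P q (m + 1 / (real n + 1))" for n
  proof -
    have "\<exists>c\<in>{c. \<exists>p. P p c}. c < m + 1 / (real n + 1)"
      by (rule cInf_lessD) (use ex in \<open>auto simp: m_def\<close>)
    then obtain q c where "P q c" "c < m + 1 / (real n + 1)" by auto
    then show ?thesis using up[of q c "m + 1 / (real n + 1)"] by auto
  qed
  then obtain p where p: "\<And>n. P (p n) (m + 1 / (real n + 1))" by metis
  have half: "m \<le> (m + a + (m + b)) / 2 - X \<Longrightarrow> 2 * X \<le> a + b" for a b X :: real
    by (simp add: field_simps)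
  have dist_sq: "(dist (p i) (p j))\<^sup>2 \<le> (1 / (real i + 1) + 1 / (real j + 1)) / (2 * k)" for i j
  proof -
    have "m \<le> ((m + 1 / (real i + 1)) + (m + 1 / (real j + 1))) / 2 - k * (norm (p i - p j))\<^sup>2"
      by (rule m_le[OF mid[OF p p]])
    then have "2 * (k * (dist (p i) (p j))\<^sup>2) \<le> 1 / (real i + 1) + 1 / (real j + 1)"
      unfolding dist_norm by (metis half)
    then show ?thesis using k by (simp add: pos_le_divide_eq mult_ac)
  qed
  have "Cauchy p" using k dist_sq by (rule Cauchy_of_dist_sq_le_harmonic)
  then obtain p0 where "p \<longlonglongrightarrow> p0" using convergent_eq_Cauchy by blast
  moreover have "(\<lambda>n. m + 1 / (real n + 1)) \<longlonglongrightarrow> m"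
    using LIMSEQ_inverse_real_of_nat_add[of m] by (simp add: inverse_eq_divide add.commute)
  ultimately have "P p0 m" using closed[of p "\<lambda>n. m + 1 / (real n + 1)"] p by blast
  then show ?thesis using m_le by blast
qed

lemma closest_point_exists_complete:
  fixes S :: "'a::{real_inner,complete_space} set"
  assumes "closed S" "convex S" "S \<noteq> {}"
  shows "\<exists>p\<in>S. \<forall>y\<in>S. dist a p \<le> dist a y"
proof -
  define P where "P p c \<longleftrightarrow> p \<in> S \<and> (dist a p)\<^sup>2 \<le> c" for p c
  have "\<exists>p0 m. P p0 m \<and> (\<forall>p c. P p c \<longrightarrow> m \<le> c)"
  proof (rule strongly_convex_epigraph_attains_min[where k = "1/4" and lo = 0])
    show "P ((1/2) *\<^sub>R (p + q)) ((c + c') / 2 - 1/4 * (norm (p - q))\<^sup>2)"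
      if "P p c" "P q c'" for p q c c'
    proof -
      have "(1/2) *\<^sub>R (p + q) \<in> S"
        using that convexD[OF assms(2), of p q "1/2" "1/2"] by (simp add: P_def scaleR_right_distrib)
      moreover have "a - (1/2) *\<^sub>R (p + q) = (1/2) *\<^sub>R ((a - p) + (a - q))"
        by (metis scaleR_half_double scaleR_right_diff_distrib add_diff_add)
      ultimately show ?thesis
        using that norm_midpoint_sq[of "a - p" "a - q"]
        by (simp add: P_def dist_norm norm_minus_commute)
    qed
    show "P p0 c0" if "\<And>n. P (p n) (c n)" "p \<longlonglongrightarrow> p0" "c \<longlonglongrightarrow> c0" for p c p0 c0
    proof -
      have "p0 \<in> S" using closed_sequentially[OF assms(1)] that by (auto simp: P_def)
      moreover have "(\<lambda>n. (dist a (p n))\<^sup>2) \<longlonglongrightarrow> (dist a p0)\<^sup>2"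
        by (intro tendsto_intros that(2))
      then have "(dist a p0)\<^sup>2 \<le> c0" using that by (auto simp: P_def intro: LIMSEQ_le)
      ultimately show ?thesis by (simp add: P_def)
    qed
  qed (use assms(3) in \<open>auto simp: P_def intro: order_trans[OF zero_le_power2]\<close>)
  then obtain p0 m where p0: "p0 \<in> S" "(dist a p0)\<^sup>2 \<le> m" and min: "\<And>y. y \<in> S \<Longrightarrow> m \<le> (dist a y)\<^sup>2"
    unfolding P_def by blast
  have "dist a p0 \<le> dist a y" if "y \<in> S" for y
    using p0(2) min[OF that] by (smt (verit) power2_le_imp_le zero_le_dist)
  then show ?thesis using p0(1) by blast
qed

lemma closest_point_variational:
  fixes S :: "'a::real_inner set"
  assumes "convex S" "p \<in> S" "\<forall>y\<in>S. dist a p \<le> dist a y" "y \<in> S"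
  shows "(y - p) \<bullet> (a - p) \<le> 0"
proof -
  have "0 \<le> 2 * t * (- ((y - p) \<bullet> (a - p))) + t\<^sup>2 * (norm (y - p))\<^sup>2" if t: "0 < t" "t \<le> 1" for t
  proof -
    have "p + t *\<^sub>R (y - p) = (1 - t) *\<^sub>R p + t *\<^sub>R y" by (simp add: algebra_simps)
    also have "\<dots> \<in> S" using assms t by (intro convexD) auto
    finally have "dist a p \<le> dist a (p + t *\<^sub>R (y - p))" using assms(3) by blast
    then have "norm (a - p) \<le> norm ((a - p) - t *\<^sub>R (y - p))"
      by (simp add: dist_norm diff_diff_eq)
    then have "(norm (a - p))\<^sup>2 \<le> (norm ((a - p) - t *\<^sub>R (y - p)))\<^sup>2"
      by (rule power_mono) simp
    also have "\<dots> = (norm (a - p))\<^sup>2 - 2 * t * ((y - p) \<bullet> (a - p)) + t\<^sup>2 * (norm (y - p))\<^sup>2"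
      unfolding power2_norm_eq_inner
      by (simp add: inner_diff_left inner_diff_right inner_commute power2_eq_square algebra_simps)
    finally show ?thesis by simp
  qed
  then have "0 \<le> - ((y - p) \<bullet> (a - p))" by (rule nonneg_if_nonneg_quadratic_near_0)
  then show ?thesis by simp
qed

lemma proj_closest_point:
  fixes S :: "'a::{real_inner,complete_space} set"
  assumes "closed S" "convex S" "S \<noteq> {}"
  shows proj_in: "proj S a \<in> S"
    and proj_dist_le: "y \<in> S \<Longrightarrow> dist a (proj S a) \<le> dist a y"
    and proj_variational: "y \<in> S \<Longrightarrow> (y - proj S a) \<bullet> (a - proj S a) \<le> 0"
proof -
  obtain p where p: "p \<in> S" "\<forall>y\<in>S. dist a p \<le> dist a y"
    using closest_point_exists_complete[OF assms] by blast
  have unique: "q = p" if q: "q \<in> S" "\<forall>y\<in>S. dist a q \<le> dist a y" for q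
  proof -
    have "(p - q) \<bullet> (a - q) \<le> 0" "(q - p) \<bullet> (a - p) \<le> 0"
      using closest_point_variational[OF assms(2)] p q by blast+
    then have "(q - p) \<bullet> (q - p) \<le> 0"
      by (simp add: inner_diff_left inner_diff_right inner_commute)
    then have "(q - p) \<bullet> (q - p) = 0" using inner_ge_zero[of "q - p"] by linarith
    then show ?thesis by simp
  qed
  have "proj S a = p"
    unfolding proj_def by (rule the_equality) (use p unique in blast)+
  then show "proj S a \<in> S" "y \<in> S \<Longrightarrow> dist a (proj S a) \<le> dist a y"
    "y \<in> S \<Longrightarrow> (y - proj S a) \<bullet> (a - proj S a) \<le> 0"
    using p closest_point_variational[OF assms(2) p] by simp_all
qed

lemma proj_closure_0:
  fixes S :: "'a::{real_inner,complete_space} set"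
  assumes "convex (closure S)" "S \<noteq> {}"
  shows "proj (closure S) 0 \<in> closure S"
    and "y \<in> closure S \<Longrightarrow> norm (proj (closure S) 0) \<le> norm y"
    and "y \<in> closure S \<Longrightarrow> 0 \<le> (y - proj (closure S) 0) \<bullet> proj (closure S) 0"
proof -
  have S: "closed (closure S)" "convex (closure S)" "closure S \<noteq> {}"
    using assms by auto
  show "proj (closure S) 0 \<in> closure S" by (rule proj_in[OF S])
  show "y \<in> closure S \<Longrightarrow> norm (proj (closure S) 0) \<le> norm y"
    using proj_dist_le[OF S, where a = 0] by (simp add: dist_norm)
  show "y \<in> closure S \<Longrightarrow> 0 \<le> (y - proj (closure S) 0) \<bullet> proj (closure S) 0"
    using proj_variational[OF S, where a = 0] by simp
qed

section \<open>Maximally monotone operators\<close>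

lemma max_monotone_op_monotoneD:
  assumes "max_monotone_op A" "u \<in> A x" "v \<in> A y"
  shows "0 \<le> (x - y) \<bullet> (u - v)"
  using assms by (auto simp: max_monotone_op_def monotone_op_def)

lemma max_monotone_op_monotone_op: "max_monotone_op A \<Longrightarrow> monotone_op A"
  by (simp add: max_monotone_op_def)

lemma max_monotone_op_memI:
  assumes max: "max_monotone_op A" and rel: "\<And>y w. w \<in> A y \<Longrightarrow> 0 \<le> (x - y) \<bullet> (u - w)"
  shows "u \<in> A x"
proof -
  define B where "B = A(x := insert u (A x))"
  have "monotone_op B" unfolding monotone_op_def
  proof (intro allI impI)
    fix x' y' u' v' assume "u' \<in> B x'" "v' \<in> B y'"
    then consider "u' \<in> A x'" "v' \<in> A y'" | "x' = x" "u' = u" "v' \<in> A y'"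
      | "y' = x" "v' = u" "u' \<in> A x'" | "x' = x" "u' = u" "y' = x" "v' = u"
      by (auto simp: B_def split: if_splits)
    then show "0 \<le> (x' - y') \<bullet> (u' - v')"
    proof cases
      case 1
      then show ?thesis using max_monotone_op_monotoneD[OF max] by blast
    next
      case 2
      then show ?thesis using rel by blast
    next
      case 3
      then have "0 \<le> (x - x') \<bullet> (u - u')" using rel by blast
      also have "(x - x') \<bullet> (u - u') = (x' - y') \<bullet> (u' - v')"
        using 3 by (simp add: inner_diff_left inner_diff_right)
      finally show ?thesis .
    qed simp
  qed
  moreover have "graph_op A \<subseteq> graph_op B" by (auto simp: graph_op_def B_def)
  ultimately have "B = A" using max by (auto simp: max_monotone_op_def)
  then show ?thesis by (metis B_def fun_upd_same insertI1)
qed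

lemma max_monotone_opI:
  assumes mono: "monotone_op A"
    and rel: "\<And>x u. (\<And>y w. w \<in> A y \<Longrightarrow> 0 \<le> (x - y) \<bullet> (u - w)) \<Longrightarrow> u \<in> A x"
  shows "max_monotone_op A"
  unfolding max_monotone_op_def
proof (intro conjI allI impI mono)
  fix B assume B: "monotone_op B" "graph_op A \<subseteq> graph_op B"
  then have sub: "w \<in> B y" if "w \<in> A y" for y w using that by (auto simp: graph_op_def)
  show "B = A"
  proof (intro ext set_eqI iffI)
    fix x u assume "u \<in> B x"
    then show "u \<in> A x" using B(1) sub by (intro rel) (auto simp: monotone_op_def)
  qed (rule sub)
qed

lemma max_monotone_op_translate:
  assumes "max_monotone_op A"
  shows "max_monotone_op (\<lambda>y. A (y + z))"
proof (rule max_monotone_opI)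
  show "monotone_op (\<lambda>y. A (y + z))"
    using max_monotone_op_monotoneD[OF assms] by (fastforce simp: monotone_op_def)
  fix x u assume rel: "\<And>y w. w \<in> A (y + z) \<Longrightarrow> 0 \<le> (x - y) \<bullet> (u - w)"
  show "u \<in> A (x + z)"
  proof (rule max_monotone_op_memI[OF assms])
    fix y w assume "w \<in> A y"
    then have "0 \<le> (x - (y - z)) \<bullet> (u - w)" using rel[of w "y - z"] by simp
    then show "0 \<le> (x + z - y) \<bullet> (u - w)" by (simp add: algebra_simps)
  qed
qed

lemma max_monotone_op_scale:
  assumes "max_monotone_op A" "\<mu> > 0"
  shows "max_monotone_op (\<lambda>y. {w. (1/\<mu>) *\<^sub>R w \<in> A y})"
proof (rule max_monotone_opI)
  show "monotone_op (\<lambda>y. {w. (1/\<mu>) *\<^sub>R w \<in> A y})" unfolding monotone_op_def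
  proof (intro allI impI)
    fix x y u v assume "u \<in> {w. (1/\<mu>) *\<^sub>R w \<in> A x}" "v \<in> {w. (1/\<mu>) *\<^sub>R w \<in> A y}"
    then have "0 \<le> (x - y) \<bullet> ((1/\<mu>) *\<^sub>R u - (1/\<mu>) *\<^sub>R v)"
      by (intro max_monotone_op_monotoneD[OF assms(1)]) auto
    also have "\<dots> = (1/\<mu>) * ((x - y) \<bullet> (u - v))"
      by (simp add: inner_diff_right diff_divide_distrib)
    finally show "0 \<le> (x - y) \<bullet> (u - v)" using assms(2) by (simp add: zero_le_divide_iff)
  qed
  fix x u assume rel: "\<And>y w. w \<in> {w. (1/\<mu>) *\<^sub>R w \<in> A y} \<Longrightarrow> 0 \<le> (x - y) \<bullet> (u - w)"
  have "(1/\<mu>) *\<^sub>R u \<in> A x"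
  proof (rule max_monotone_op_memI[OF assms(1)])
    fix y w assume "w \<in> A y"
    then have "0 \<le> (x - y) \<bullet> (u - \<mu> *\<^sub>R w)" using rel[of "\<mu> *\<^sub>R w" y] assms(2) by simp
    also have "(x - y) \<bullet> (u - \<mu> *\<^sub>R w) = \<mu> * ((x - y) \<bullet> ((1/\<mu>) *\<^sub>R u - w))"
      using assms(2) by (simp add: inner_diff_right algebra_simps)
    finally show "0 \<le> (x - y) \<bullet> ((1/\<mu>) *\<^sub>R u - w)" using assms(2) by (simp add: zero_le_mult_iff)
  qed
  then show "u \<in> {w. (1/\<mu>) *\<^sub>R w \<in> A x}" by simp
qed

lemma max_monotone_op_inv_op:
  assumes "max_monotone_op A"
  shows "max_monotone_op (inv_op A)"
proof (rule max_monotone_opI)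
  show "monotone_op (inv_op A)"
    using max_monotone_op_monotoneD[OF assms]
    by (fastforce simp: monotone_op_def inv_op_def inner_commute)
  fix x u assume rel: "\<And>y w. w \<in> inv_op A y \<Longrightarrow> 0 \<le> (x - y) \<bullet> (u - w)"
  have "x \<in> A u"
  proof (rule max_monotone_op_memI[OF assms])
    fix y w assume "w \<in> A y"
    then have "0 \<le> (x - w) \<bullet> (u - y)" using rel[of y w] by (simp add: inv_op_def)
    then show "0 \<le> (u - y) \<bullet> (x - w)" by (simp add: inner_commute)
  qed
  then show "u \<in> inv_op A x" by (simp add: inv_op_def)
qed

lemma max_monotone_op_graph_nonempty:
  assumes "max_monotone_op A"
  obtains y w where "w \<in> A y"
proof -
  have "\<exists>y w. w \<in> A y"
  proof (rule ccontr)
    assume empty: "\<not> (\<exists>y w. w \<in> A y)"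
    then have "0 \<in> A 0" by (intro max_monotone_op_memI[OF assms]) auto
    with empty show False by blast
  qed
  then show ?thesis using that by blast
qed

lemma dom_op_inv_op [simp]: "dom_op (inv_op A) = ran_op A"
  by (auto simp: dom_op_def inv_op_def ran_op_def)

lemma ran_op_inv_op [simp]: "ran_op (inv_op A) = dom_op A"
  by (auto simp: dom_op_def inv_op_def ran_op_def)

section \<open>Minty's theorem\<close>

text \<open>The Fitzpatrick function of \<open>A\<close> is the supremum of \<open>fitzpatrick_term y w\<close> over the graph
  of \<open>A\<close>. It may be infinite, so \<open>fitzpatrick_le A p c\<close> states that its value at \<open>p\<close> plus half
  the squared norm of \<open>p\<close> is at most \<open>c\<close>. Minty's theorem comes from a minimizer of this sum.\<close>

definition fitzpatrick_term :: "'a::real_inner \<Rightarrow> 'a \<Rightarrow> 'a \<times> 'a \<Rightarrow> real" where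
  "fitzpatrick_term y w p = fst p \<bullet> w + y \<bullet> snd p - y \<bullet> w"

definition fitzpatrick_le :: "('a::real_inner \<Rightarrow> 'a set) \<Rightarrow> 'a \<times> 'a \<Rightarrow> real \<Rightarrow> bool" where
  "fitzpatrick_le A p c \<longleftrightarrow> (\<forall>y w. w \<in> A y \<longrightarrow> fitzpatrick_term y w p + (norm p)\<^sup>2 / 2 \<le> c)"

lemma fitzpatrick_term_affine:
  assumes "a + b = 1"
  shows "fitzpatrick_term y w (a *\<^sub>R p + b *\<^sub>R q) = a * fitzpatrick_term y w p + b * fitzpatrick_term y w q"
proof -
  have "fitzpatrick_term y w (a *\<^sub>R p + b *\<^sub>R q)
      = a * (fst p \<bullet> w) + b * (fst q \<bullet> w) + a * (y \<bullet> snd p) + b * (y \<bullet> snd q) - (a + b) * (y \<bullet> w)"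
    using assms by (simp add: fitzpatrick_term_def inner_add_left inner_add_right)
  also have "\<dots> = a * fitzpatrick_term y w p + b * fitzpatrick_term y w q"
    by (simp add: fitzpatrick_term_def algebra_simps)
  finally show ?thesis .
qed

lemma fitzpatrick_term_le_inner:
  assumes "monotone_op A" "w \<in> A y" "w' \<in> A y'"
  shows "fitzpatrick_term y w (y', w') \<le> y' \<bullet> w'"
proof -
  have "0 \<le> (y' - y) \<bullet> (w' - w)" using assms by (auto simp: monotone_op_def)
  then show ?thesis by (simp add: fitzpatrick_term_def inner_diff_left inner_diff_right inner_commute)
qed

lemma inner_le_fitzpatrick_bound:
  assumes "max_monotone_op A" "\<And>y w. w \<in> A y \<Longrightarrow> fitzpatrick_term y w (x, u) \<le> c"
  shows "x \<bullet> u \<le> c"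
proof (rule ccontr)
  assume gt: "\<not> x \<bullet> u \<le> c"
  have "u \<in> A x"
  proof (rule max_monotone_op_memI[OF assms(1)])
    fix y w assume "w \<in> A y"
    moreover have "(x - y) \<bullet> (u - w) = x \<bullet> u - fitzpatrick_term y w (x, u)"
      by (simp add: fitzpatrick_term_def inner_diff_left inner_diff_right inner_commute)
    ultimately show "0 \<le> (x - y) \<bullet> (u - w)" using assms(2) gt by fastforce
  qed
  then have "fitzpatrick_term x u (x, u) \<le> c" by (rule assms(2))
  with gt show False by (simp add: fitzpatrick_term_def inner_commute)
qed

lemma fitzpatrick_le_nonneg:
  assumes max: "max_monotone_op A" and le: "fitzpatrick_le A p c"
  shows "0 \<le> c"
proof -
  obtain x u where p: "p = (x, u)" by fastforce
  have "x \<bullet> u \<le> c - (norm p)\<^sup>2 / 2"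
    using le unfolding fitzpatrick_le_def p
    by (intro inner_le_fitzpatrick_bound[OF max]) (auto simp: algebra_simps)
  moreover have "(norm p)\<^sup>2 = (norm x)\<^sup>2 + (norm u)\<^sup>2" by (simp add: norm_Pair p)
  moreover have "(norm (x + u))\<^sup>2 = (norm x)\<^sup>2 + 2 * (x \<bullet> u) + (norm u)\<^sup>2"
    unfolding power2_norm_eq_inner by (simp add: inner_add_left inner_add_right inner_commute)
  ultimately show "0 \<le> c" using zero_le_power2[of "norm (x + u)"] by argo
qed

lemma fitzpatrick_le_midpoint:
  assumes le: "fitzpatrick_le A p c" "fitzpatrick_le A q c'"
  shows "fitzpatrick_le A ((1/2) *\<^sub>R (p + q)) ((c + c') / 2 - 1/8 * (norm (p - q))\<^sup>2)"
  unfolding fitzpatrick_le_def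
proof (intro allI impI)
  fix y w assume "w \<in> A y"
  then have "fitzpatrick_term y w p + (norm p)\<^sup>2 / 2 \<le> c" "fitzpatrick_term y w q + (norm q)\<^sup>2 / 2 \<le> c'"
    using le unfolding fitzpatrick_le_def by auto
  moreover have "(1/2) *\<^sub>R (p + q) = (1/2) *\<^sub>R p + (1/2) *\<^sub>R q"
    by (rule scaleR_right_distrib)
  then have "fitzpatrick_term y w ((1/2) *\<^sub>R (p + q))
      = 1/2 * fitzpatrick_term y w p + 1/2 * fitzpatrick_term y w q"
    by (simp add: fitzpatrick_term_affine)
  ultimately show "fitzpatrick_term y w ((1/2) *\<^sub>R (p + q)) + (norm ((1/2) *\<^sub>R (p + q)))\<^sup>2 / 2
      \<le> (c + c') / 2 - 1/8 * (norm (p - q))\<^sup>2"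
    using norm_midpoint_sq[of p q] by argo
qed

lemma fitzpatrick_le_limit:
  assumes le: "\<And>n. fitzpatrick_le A (p n) (c n)" and lim: "p \<longlonglongrightarrow> p0" "c \<longlonglongrightarrow> c0"
  shows "fitzpatrick_le A p0 c0"
  unfolding fitzpatrick_le_def
proof (intro allI impI)
  fix y w assume "w \<in> A y"
  moreover have "(\<lambda>n. fitzpatrick_term y w (p n) + (norm (p n))\<^sup>2 / 2)
      \<longlonglongrightarrow> fitzpatrick_term y w p0 + (norm p0)\<^sup>2 / 2"
    unfolding fitzpatrick_term_def by (intro tendsto_intros lim) simp
  ultimately show "fitzpatrick_term y w p0 + (norm p0)\<^sup>2 / 2 \<le> c0"
    using le lim(2) unfolding fitzpatrick_le_def by (auto intro: LIMSEQ_le)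
qed

lemma fitzpatrick_le_attains_min:
  fixes A :: "'a::{real_inner,complete_space} \<Rightarrow> 'a set"
  assumes max: "max_monotone_op A"
  shows "\<exists>p m. fitzpatrick_le A p m \<and> (\<forall>q c. fitzpatrick_le A q c \<longrightarrow> m \<le> c)"
proof (rule strongly_convex_epigraph_attains_min[where k = "1/8" and lo = 0])
  obtain y w where "w \<in> A y" using max_monotone_op_graph_nonempty[OF max] .
  then have "fitzpatrick_le A (y, w) (y \<bullet> w + (norm (y, w))\<^sup>2 / 2)"
    unfolding fitzpatrick_le_def
    using fitzpatrick_term_le_inner[OF max_monotone_op_monotone_op[OF max]] by fastforce
  then show "\<exists>p c. fitzpatrick_le A p c" by blast
next
  fix p c c' assume "fitzpatrick_le A p c" "c \<le> c'"
  then show "fitzpatrick_le A p c'" unfolding fitzpatrick_le_def by force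
next
  show "\<And>p c. fitzpatrick_le A p c \<Longrightarrow> 0 \<le> c" by (rule fitzpatrick_le_nonneg[OF max])
  show "\<And>p q c c'. fitzpatrick_le A p c \<Longrightarrow> fitzpatrick_le A q c' \<Longrightarrow>
      fitzpatrick_le A ((1/2) *\<^sub>R (p + q)) ((c + c') / 2 - 1/8 * (norm (p - q))\<^sup>2)"
    by (rule fitzpatrick_le_midpoint)
  show "\<And>p c p0 c0. (\<And>n. fitzpatrick_le A (p n) (c n)) \<Longrightarrow> p \<longlonglongrightarrow> p0 \<Longrightarrow> c \<longlonglongrightarrow> c0 \<Longrightarrow>
      fitzpatrick_le A p0 c0"
    by (rule fitzpatrick_le_limit)
qed simp

lemma fitzpatrick_le_segment:
  assumes mono: "monotone_op A" and bound: "\<And>y w. w \<in> A y \<Longrightarrow> fitzpatrick_term y w p \<le> c"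
    and graph: "w' \<in> A y'" and t: "0 \<le> t" "t \<le> 1"
  defines "pt \<equiv> (1 - t) *\<^sub>R p + t *\<^sub>R (y', w')"
  shows "fitzpatrick_le A pt ((1 - t) * c + t * (y' \<bullet> w') + (norm pt)\<^sup>2 / 2)"
  unfolding fitzpatrick_le_def
proof (intro allI impI)
  fix y w assume yw: "w \<in> A y"
  have "fitzpatrick_term y w pt = (1 - t) * fitzpatrick_term y w p + t * fitzpatrick_term y w (y', w')"
    unfolding pt_def by (rule fitzpatrick_term_affine) simp
  also have "\<dots> \<le> (1 - t) * c + t * (y' \<bullet> w')"
    using bound[OF yw] fitzpatrick_term_le_inner[OF mono yw graph] t
    by (intro add_mono mult_left_mono) auto
  finally show "fitzpatrick_term y w pt + (norm pt)\<^sup>2 / 2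
      \<le> (1 - t) * c + t * (y' \<bullet> w') + (norm pt)\<^sup>2 / 2" by simp
qed

lemma fitzpatrick_minimizer_ineq:
  fixes A :: "'a::real_inner \<Rightarrow> 'a set"
  assumes max: "max_monotone_op A"
    and min: "fitzpatrick_le A (x0, u0) m" "\<forall>q c. fitzpatrick_le A q c \<longrightarrow> m \<le> c"
    and graph: "w1 \<in> A y1"
  shows "(norm (x0 + u0))\<^sup>2 \<le> (- u0 - y1) \<bullet> (- x0 - w1)"
proof -
  define p0 where "p0 = (x0, u0)"
  define g where "g = (y1, w1)"
  define c0 where "c0 = m - (norm p0)\<^sup>2 / 2"
  have bound: "fitzpatrick_term y w p0 \<le> c0" if "w \<in> A y" for y w
    using min(1) that unfolding fitzpatrick_le_def c0_def p0_def by force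
  \<comment> \<open>minimality of \<open>p0\<close> along the segment from \<open>p0\<close> to the graph point \<open>g\<close>\<close>
  have "0 \<le> 2 * t * ((y1 \<bullet> w1 - c0 + (g - p0) \<bullet> p0) / 2) + t\<^sup>2 * ((norm (g - p0))\<^sup>2 / 2)"
    if t: "0 < t" "t \<le> 1" for t
  proof -
    define pt where "pt = (1 - t) *\<^sub>R p0 + t *\<^sub>R g"
    have pt: "pt = p0 + t *\<^sub>R (g - p0)" unfolding pt_def by (simp add: algebra_simps)
    have "fitzpatrick_le A pt ((1 - t) * c0 + t * (y1 \<bullet> w1) + (norm pt)\<^sup>2 / 2)"
      unfolding pt_def g_def using t
      by (intro fitzpatrick_le_segment max_monotone_op_monotone_op[OF max] bound graph) auto
    then have "m \<le> (1 - t) * c0 + t * (y1 \<bullet> w1) + (norm pt)\<^sup>2 / 2" using min(2) by blast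
    moreover have "(norm pt)\<^sup>2 = (norm p0)\<^sup>2 + 2 * t * ((g - p0) \<bullet> p0) + t\<^sup>2 * (norm (g - p0))\<^sup>2"
      unfolding pt power2_norm_eq_inner
      by (simp add: inner_add_left inner_add_right inner_commute algebra_simps power2_eq_square)
    moreover have "m = c0 + (norm p0)\<^sup>2 / 2" by (simp add: c0_def)
    ultimately show ?thesis by (simp add: algebra_simps) argo
  qed
  then have "0 \<le> (y1 \<bullet> w1 - c0 + (g - p0) \<bullet> p0) / 2" by (rule nonneg_if_nonneg_quadratic_near_0)
  moreover have "x0 \<bullet> u0 \<le> c0"
    using bound unfolding p0_def by (rule inner_le_fitzpatrick_bound[OF max])
  moreover have "(g - p0) \<bullet> p0 = (y1 - x0) \<bullet> x0 + (w1 - u0) \<bullet> u0"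
    by (simp add: g_def p0_def)
  moreover have "(- u0 - y1) \<bullet> (- x0 - w1) - (norm (x0 + u0))\<^sup>2
      = y1 \<bullet> w1 - x0 \<bullet> u0 + ((y1 - x0) \<bullet> x0 + (w1 - u0) \<bullet> u0)"
    unfolding power2_norm_eq_inner
    by (simp add: inner_add_left inner_add_right inner_diff_left inner_diff_right inner_commute
        algebra_simps)
  ultimately show ?thesis by argo
qed

lemma max_monotone_op_minty_0:
  fixes A :: "'a::{real_inner,complete_space} \<Rightarrow> 'a set"
  assumes max: "max_monotone_op A"
  shows "\<exists>x. - x \<in> A x"
proof -
  obtain x0 u0 m where min: "fitzpatrick_le A (x0, u0) m" "\<forall>q c. fitzpatrick_le A q c \<longrightarrow> m \<le> c"
    using fitzpatrick_le_attains_min[OF max] by auto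
  note ineq = fitzpatrick_minimizer_ineq[OF max min]
  have "- x0 \<in> A (- u0)"
  proof (rule max_monotone_op_memI[OF max])
    fix y w assume "w \<in> A y"
    then show "0 \<le> (- u0 - y) \<bullet> (- x0 - w)"
      using ineq zero_le_power2[of "norm (x0 + u0)"] by (meson order_trans)
  qed
  moreover from ineq[OF this] have "u0 = - x0"
    by (simp add: add_eq_0_iff)
  ultimately show ?thesis by auto
qed

lemma max_monotone_op_minty:
  fixes A :: "'a::{real_inner,complete_space} \<Rightarrow> 'a set"
  assumes "max_monotone_op A"
  shows "\<exists>x. z - x \<in> A x"
proof -
  obtain y where "- y \<in> A (y + z)"
    using max_monotone_op_minty_0[OF max_monotone_op_translate[OF assms]] by blast
  then have "z - (y + z) \<in> A (y + z)" by simp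
  then show ?thesis by blast
qed

lemma max_monotone_op_minty_scaled:
  fixes A :: "'a::{real_inner,complete_space} \<Rightarrow> 'a set"
  assumes "max_monotone_op A" "\<mu> > 0"
  shows "\<exists>y. (1/\<mu>) *\<^sub>R (z - y) \<in> A y"
  using max_monotone_op_minty[OF max_monotone_op_scale[OF assms], of z] by simp

lemma resolvent_eq:
  fixes A :: "'a::{real_inner,complete_space} \<Rightarrow> 'a set"
  assumes max: "max_monotone_op A" and "z - x \<in> A x"
  shows "resolvent A z = x"
  unfolding resolvent_def
proof (rule the_equality)
  fix y assume "z - y \<in> A y"
  then have "0 \<le> (y - x) \<bullet> ((z - y) - (z - x))"
    using assms by (intro max_monotone_op_monotoneD[OF max])
  then have "(y - x) \<bullet> (y - x) \<le> 0" by (simp add: inner_diff_right inner_commute)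
  then show "y = x" using inner_ge_zero[of "y - x"] by simp
qed fact

lemma resolvent_mem:
  fixes A :: "'a::{real_inner,complete_space} \<Rightarrow> 'a set"
  assumes "max_monotone_op A"
  shows "z - resolvent A z \<in> A (resolvent A z)"
  using max_monotone_op_minty[OF assms, of z] resolvent_eq[OF assms] by auto

lemma resolvent_inv_op:
  fixes A :: "'a::{real_inner,complete_space} \<Rightarrow> 'a set"
  assumes "max_monotone_op A"
  shows "resolvent (inv_op A) z = z - resolvent A z"
  using resolvent_mem[OF assms, of z]
  by (intro resolvent_eq[OF max_monotone_op_inv_op[OF assms]]) (simp add: inv_op_def)

section \<open>Domain and range of a maximally monotone operator\<close>

lemma max_monotone_op_scaled_resolvent_segment_bound:
  fixes A :: "'a::real_inner \<Rightarrow> 'a set"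
  assumes max: "max_monotone_op A" and y1: "y1' \<in> A y1" and y2: "y2' \<in> A y2"
    and t: "0 \<le> t" "t \<le> 1" and x: "x = (1 - t) *\<^sub>R y1 + t *\<^sub>R y2"
    and lam: "0 < lam" and xl: "(1/lam) *\<^sub>R (x - xl) \<in> A xl"
  shows "(norm (x - xl))\<^sup>2 \<le> lam * ((norm y1' + norm y2') * (norm (x - xl) + norm (x - y1) + norm (x - y2)))"
proof -
  define r where "r = norm (x - xl)"
  define K where "K = norm y1' + norm y2'"
  define C where "C = norm (x - y1) + norm (x - y2)"
  have step: "- (lam * (K * (r + C))) \<le> (xl - y) \<bullet> (x - xl)"
    if "y' \<in> A y" "norm y' \<le> K" "norm (x - y) \<le> C" for y y'
  proof -
    have "0 \<le> (xl - y) \<bullet> ((1/lam) *\<^sub>R (x - xl) - y')"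
      by (rule max_monotone_op_monotoneD[OF max xl that(1)])
    then have "0 \<le> lam * ((xl - y) \<bullet> ((1/lam) *\<^sub>R (x - xl) - y'))" using lam by simp
    also have "\<dots> = (xl - y) \<bullet> (x - xl) - lam * ((xl - y) \<bullet> y')"
      using lam by (simp add: inner_diff_right algebra_simps)
    finally have "lam * ((xl - y) \<bullet> y') \<le> (xl - y) \<bullet> (x - xl)" by simp
    moreover have "norm (xl - y) \<le> r + C"
      using that(3) norm_triangle_ineq[of "xl - x" "x - y"] by (simp add: r_def norm_minus_commute)
    then have "norm (xl - y) * norm y' \<le> (r + C) * K"
      using that(2) by (intro mult_mono) (auto simp: r_def C_def)
    then have "- (K * (r + C)) \<le> (xl - y) \<bullet> y'"
      using Cauchy_Schwarz_ineq2[of "xl - y" y'] by (simp add: algebra_simps abs_le_iff)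
    then have "lam * (- (K * (r + C))) \<le> lam * ((xl - y) \<bullet> y')"
      using lam by (intro mult_left_mono) auto
    ultimately show ?thesis by linarith
  qed
  have "(1 - t) * ((xl - y1) \<bullet> (x - xl)) + t * ((xl - y2) \<bullet> (x - xl))
      = ((1 - t) *\<^sub>R (xl - y1) + t *\<^sub>R (xl - y2)) \<bullet> (x - xl)"
    by (simp add: inner_add_left)
  also have "(1 - t) *\<^sub>R (xl - y1) + t *\<^sub>R (xl - y2) = xl - x"
    by (simp add: x algebra_simps)
  also have "(xl - x) \<bullet> (x - xl) = - r\<^sup>2"
    by (simp add: r_def power2_norm_eq_inner inner_diff_left inner_diff_right inner_commute)
  finally have comb: "(1 - t) * ((xl - y1) \<bullet> (x - xl)) + t * ((xl - y2) \<bullet> (x - xl)) = - r\<^sup>2" .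
  have "(1 - t) * (- (lam * (K * (r + C)))) \<le> (1 - t) * ((xl - y1) \<bullet> (x - xl))"
    using step[OF y1] t by (intro mult_left_mono) (auto simp: K_def C_def)
  moreover have "t * (- (lam * (K * (r + C)))) \<le> t * ((xl - y2) \<bullet> (x - xl))"
    using step[OF y2] t by (intro mult_left_mono) (auto simp: K_def C_def)
  ultimately have "r\<^sup>2 \<le> lam * (K * (r + C))"
    using comb by (simp add: algebra_simps)
  then show ?thesis by (simp add: r_def K_def C_def add.assoc)
qed

lemma sq_le_of_sq_le_linear:
  fixes r a b :: real
  assumes "r\<^sup>2 \<le> a * (r + b)"
  shows "r\<^sup>2 \<le> a\<^sup>2 + 2 * (a * b)"
proof -
  have "2 * (a * r) \<le> r\<^sup>2 + a\<^sup>2"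
    using zero_le_power2[of "r - a"] by (simp add: power2_diff mult.commute)
  moreover have "a * (r + b) = a * r + a * b" by (simp add: algebra_simps)
  ultimately show ?thesis using assms by linarith
qed

lemma max_monotone_op_segment_in_closure_dom:
  fixes A :: "'a::{real_inner,complete_space} \<Rightarrow> 'a set"
  assumes max: "max_monotone_op A" and "y1 \<in> dom_op A" "y2 \<in> dom_op A" "0 \<le> t" "t \<le> 1"
  shows "(1 - t) *\<^sub>R y1 + t *\<^sub>R y2 \<in> closure (dom_op A)"
proof -
  obtain y1' y2' where y': "y1' \<in> A y1" "y2' \<in> A y2" using assms(2,3) by (auto simp: dom_op_def)
  define x where "x = (1 - t) *\<^sub>R y1 + t *\<^sub>R y2"
  define K where "K = norm y1' + norm y2'"
  define C where "C = norm (x - y1) + norm (x - y2)"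
  define lam where "lam n = inverse (real (Suc n))" for n
  \<comment> \<open>the resolvents of \<open>lam n A\<close> at \<open>x\<close> lie in \<open>dom_op A\<close> and converge to \<open>x\<close>\<close>
  have "\<exists>xl. (1 / lam n) *\<^sub>R (x - xl) \<in> A xl" for n
    by (rule max_monotone_op_minty_scaled[OF max]) (simp add: lam_def)
  then obtain xl where xl: "\<And>n. (1 / lam n) *\<^sub>R (x - xl n) \<in> A (xl n)" by metis
  have "(norm (x - xl n))\<^sup>2 \<le> lam n * (K * (norm (x - xl n) + C))" for n
    using max_monotone_op_scaled_resolvent_segment_bound[OF max y' assms(4,5) x_def _ xl]
    by (simp add: lam_def K_def C_def add.assoc)
  then have bound: "(norm (xl n - x))\<^sup>2 \<le> (lam n * K)\<^sup>2 + 2 * (lam n * K * C)" for n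
    using sq_le_of_sq_le_linear[of "norm (x - xl n)" "lam n * K" C]
    by (simp add: norm_minus_commute mult.assoc)
  have "lam \<longlonglongrightarrow> 0" unfolding lam_def by (rule LIMSEQ_inverse_real_of_nat)
  then have "(\<lambda>n. (lam n * K)\<^sup>2 + 2 * (lam n * K * C)) \<longlonglongrightarrow> (0 * K)\<^sup>2 + 2 * (0 * K * C)"
    by (intro tendsto_intros)
  then have lim: "(\<lambda>n. (lam n * K)\<^sup>2 + 2 * (lam n * K * C)) \<longlonglongrightarrow> 0" by simp
  have "(\<lambda>n. (norm (xl n - x))\<^sup>2) \<longlonglongrightarrow> 0"
    by (rule tendsto_sandwich[OF _ _ tendsto_const lim]) (simp_all add: bound)
  then have "xl \<longlonglongrightarrow> x" by (rule tendsto_of_norm_diff_sq)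
  moreover have "xl n \<in> dom_op A" for n using xl[of n] by (auto simp: dom_op_def)
  ultimately show ?thesis unfolding x_def[symmetric] closure_sequential by blast
qed

lemma convex_closure_dom_op:
  fixes A :: "'a::{real_inner,complete_space} \<Rightarrow> 'a set"
  assumes max: "max_monotone_op A"
  shows "convex (closure (dom_op A))"
proof (rule convexI)
  fix a b :: 'a and u v :: real
  assume a: "a \<in> closure (dom_op A)" and b: "b \<in> closure (dom_op A)" and uv: "0 \<le> u" "0 \<le> v" "u + v = 1"
  obtain f where f: "\<And>n. f n \<in> dom_op A" "f \<longlonglongrightarrow> a" using a closure_sequential by metis
  obtain g where g: "\<And>n. g n \<in> dom_op A" "g \<longlonglongrightarrow> b" using b closure_sequential by metis
  have mem: "(1 - v) *\<^sub>R f n + v *\<^sub>R g n \<in> closure (dom_op A)" for n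
    using max_monotone_op_segment_in_closure_dom[OF max f(1) g(1)] uv by auto
  have lim: "(\<lambda>n. (1 - v) *\<^sub>R f n + v *\<^sub>R g n) \<longlonglongrightarrow> (1 - v) *\<^sub>R a + v *\<^sub>R b"
    by (intro tendsto_intros f g)
  have "(1 - v) *\<^sub>R a + v *\<^sub>R b \<in> closure (dom_op A)"
    by (rule closed_sequentially[OF closed_closure _ lim]) (use mem in blast)
  moreover have "u = 1 - v" using uv by simp
  ultimately show "u *\<^sub>R a + v *\<^sub>R b \<in> closure (dom_op A)" by simp
qed

lemma convex_closure_ran_op:
  fixes A :: "'a::{real_inner,complete_space} \<Rightarrow> 'a set"
  assumes "max_monotone_op A"
  shows "convex (closure (ran_op A))"
  using convex_closure_dom_op[OF max_monotone_op_inv_op[OF assms]] by simp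

lemma max_monotone_op_scaled_resolvent_recession_bound:
  assumes max: "max_monotone_op A" and dom: "\<And>a. a \<in> dom_op A \<Longrightarrow> a \<bullet> n \<le> c"
    and graph: "a' \<in> A a" and mu: "0 < mu"
    and y: "(1 / mu) *\<^sub>R (a + mu *\<^sub>R (a' + n) - y) \<in> A y"
  shows "(norm ((1 / mu) *\<^sub>R (a + mu *\<^sub>R (a' + n) - y) - (a' + n)))\<^sup>2 \<le> (c - a \<bullet> n) / mu"
proof -
  define d where "d = y - a"
  define w where "w = (1 / mu) *\<^sub>R (a + mu *\<^sub>R (a' + n) - y)"
  have w: "w - (a' + n) = - ((1 / mu) *\<^sub>R d)"
    using mu by (simp add: w_def d_def algebra_simps)
  have "0 \<le> (y - a) \<bullet> (w - a')"
    using y graph unfolding w_def by (rule max_monotone_op_monotoneD[OF max])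
  also have "w - a' = n - (1 / mu) *\<^sub>R d" using w by (simp add: algebra_simps)
  then have "(y - a) \<bullet> (w - a') = d \<bullet> n - (1 / mu) * (d \<bullet> d)"
    by (simp add: d_def[symmetric] inner_diff_right)
  finally have "(1 / mu) * (d \<bullet> d) \<le> d \<bullet> n" by simp
  also have "\<dots> \<le> c - a \<bullet> n"
    using dom[of y] y by (auto simp: d_def dom_op_def inner_diff_left)
  finally have "(1 / mu) * ((1 / mu) * (d \<bullet> d)) \<le> (1 / mu) * (c - a \<bullet> n)"
    using mu by (intro mult_left_mono) auto
  moreover have "(norm (w - (a' + n)))\<^sup>2 = (1 / mu) * ((1 / mu) * (d \<bullet> d))"
    unfolding w power2_norm_eq_inner by simp
  ultimately show ?thesis by (simp add: w_def)
qed

lemma max_monotone_op_ran_recession: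
  fixes A :: "'a::{real_inner,complete_space} \<Rightarrow> 'a set"
  assumes max: "max_monotone_op A" and dom: "\<And>a. a \<in> dom_op A \<Longrightarrow> a \<bullet> n \<le> c"
    and graph: "a' \<in> A a"
  shows "a' + n \<in> closure (ran_op A)"
proof -
  define mu where "mu k = real (Suc k)" for k
  have mu: "0 < mu k" for k by (simp add: mu_def)
  have "\<exists>y. (1 / mu k) *\<^sub>R (a + mu k *\<^sub>R (a' + n) - y) \<in> A y" for k
    using max_monotone_op_minty_scaled[OF max mu] .
  then obtain y where y: "\<And>k. (1 / mu k) *\<^sub>R (a + mu k *\<^sub>R (a' + n) - y k) \<in> A (y k)" by metis
  define w where "w k = (1 / mu k) *\<^sub>R (a + mu k *\<^sub>R (a' + n) - y k)" for k
  have bound: "(norm (w k - (a' + n)))\<^sup>2 \<le> (c - a \<bullet> n) / mu k" for k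
    unfolding w_def by (rule max_monotone_op_scaled_resolvent_recession_bound[OF max dom graph mu y])
  have lim: "(\<lambda>k. (c - a \<bullet> n) / mu k) \<longlonglongrightarrow> 0"
    unfolding mu_def using LIMSEQ_inverse_real_of_nat tendsto_mult_right_zero[of _ sequentially "c - a \<bullet> n"]
    by (simp add: divide_inverse)
  have "(\<lambda>k. (norm (w k - (a' + n)))\<^sup>2) \<longlonglongrightarrow> 0"
    by (rule tendsto_sandwich[OF _ _ tendsto_const lim]) (simp_all add: bound)
  then have "w \<longlonglongrightarrow> a' + n" by (rule tendsto_of_norm_diff_sq)
  moreover have "w k \<in> ran_op A" for k using y[of k] by (auto simp: w_def ran_op_def)
  ultimately show ?thesis unfolding closure_sequential by blast
qed

lemma mem_closure_translate:
  fixes S :: "'a::real_normed_vector set"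
  assumes "\<And>r. r \<in> S \<Longrightarrow> r + w \<in> closure S" and "x \<in> closure S"
  shows "x + w \<in> closure S"
proof -
  have "(+) w ` S \<subseteq> closure S" using assms(1) by (auto simp: add.commute)
  then have "closure ((+) w ` S) \<subseteq> closure S" by (simp add: closure_minimal)
  moreover have "w + x \<in> (+) w ` closure S" using assms(2) by blast
  ultimately have "w + x \<in> closure S" by (metis closure_translation subsetD)
  then show ?thesis by (simp add: add.commute)
qed

lemma max_monotone_op_closure_ran_recession:
  fixes A :: "'a::{real_inner,complete_space} \<Rightarrow> 'a set"
  assumes "max_monotone_op A" "\<And>a. a \<in> dom_op A \<Longrightarrow> a \<bullet> n \<le> c" "r \<in> closure (ran_op A)"
  shows "r + n \<in> closure (ran_op A)"
proof (rule mem_closure_translate[OF _ assms(3)])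
  fix r assume "r \<in> ran_op A"
  then obtain a where "r \<in> A a" by (auto simp: ran_op_def)
  then show "r + n \<in> closure (ran_op A)"
    using max_monotone_op_ran_recession[OF assms(1), of n c] assms(2) by blast
qed

section \<open>Closures of Minkowski sums\<close>

lemma mem_closure_set_image2:
  assumes cont: "continuous_on UNIV (\<lambda>p. f (fst p) (snd p))"
    and "a \<in> closure S" "b \<in> closure T"
  shows "f a b \<in> closure {f a b | a b. a \<in> S \<and> b \<in> T}"
proof -
  have "(\<lambda>p. f (fst p) (snd p)) ` closure (S \<times> T) \<subseteq> closure {f a b | a b. a \<in> S \<and> b \<in> T}"
  proof (rule image_closure_subset)
    show "continuous_on (closure (S \<times> T)) (\<lambda>p. f (fst p) (snd p))"
      using continuous_on_subset[OF cont] by blast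
    have "(\<lambda>p. f (fst p) (snd p)) ` (S \<times> T) \<subseteq> {f a b | a b. a \<in> S \<and> b \<in> T}" by force
    then show "(\<lambda>p. f (fst p) (snd p)) ` (S \<times> T) \<subseteq> closure {f a b | a b. a \<in> S \<and> b \<in> T}"
      using closure_subset by blast
  qed simp
  moreover have "(a, b) \<in> closure (S \<times> T)" using assms(2,3) by (simp add: closure_Times)
  ultimately show ?thesis by (metis (no_types, lifting) fst_conv snd_conv image_subset_iff)
qed

lemma mem_closure_sum_set:
  fixes S T :: "'a::real_normed_vector set"
  assumes "a \<in> closure S" "b \<in> closure T"
  shows "a + b \<in> closure {a + b | a b. a \<in> S \<and> b \<in> T}"
  by (rule mem_closure_set_image2[OF _ assms]) (intro continuous_intros)

lemma mem_closure_diff_set: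
  fixes S T :: "'a::real_normed_vector set"
  assumes "a \<in> closure S" "b \<in> closure T"
  shows "a - b \<in> closure {a - b | a b. a \<in> S \<and> b \<in> T}"
  by (rule mem_closure_set_image2[OF _ assms]) (intro continuous_intros)

lemma convex_closure_if_dense_convex:
  fixes M :: "'a::real_normed_vector set"
  assumes "convex E" "M \<subseteq> E" "E \<subseteq> closure M"
  shows "convex (closure M)"
proof -
  have "closure M \<subseteq> closure E" using assms(2) by (rule closure_mono)
  moreover have "closure E \<subseteq> closure M" using closure_mono[OF assms(3)] by simp
  ultimately have "closure M = closure E" by (rule subset_antisym)
  then show ?thesis using assms(1) by (simp add: convex_closure)
qed

lemma convex_closure_sum_set:
  fixes S T :: "'a::real_normed_vector set"
  assumes "convex (closure S)" "convex (closure T)"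
  shows "convex (closure {a + b | a b. a \<in> S \<and> b \<in> T})"
proof (rule convex_closure_if_dense_convex)
  show "convex {a + b | a b. a \<in> closure S \<and> b \<in> closure T}"
  proof -
    have "{a + b | a b. a \<in> closure S \<and> b \<in> closure T} = (\<Union>x\<in>closure S. \<Union>y\<in>closure T. {x + y})"
      by auto
    then show ?thesis using convex_sums[OF assms] by simp
  qed
next
  show "{a + b | a b. a \<in> S \<and> b \<in> T} \<subseteq> {a + b | a b. a \<in> closure S \<and> b \<in> closure T}"
    using closure_subset by blast
  show "{a + b | a b. a \<in> closure S \<and> b \<in> closure T} \<subseteq> closure {a + b | a b. a \<in> S \<and> b \<in> T}"
    using mem_closure_sum_set by blast
qed

lemma convex_closure_diff_set:
  fixes S T :: "'a::real_normed_vector set"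
  assumes "convex (closure S)" "convex (closure T)"
  shows "convex (closure {a - b | a b. a \<in> S \<and> b \<in> T})"
proof (rule convex_closure_if_dense_convex)
  show "convex {a - b | a b. a \<in> closure S \<and> b \<in> closure T}"
  proof -
    have "{a - b | a b. a \<in> closure S \<and> b \<in> closure T} = (\<Union>x\<in>closure S. \<Union>y\<in>closure T. {x - y})"
      by auto
    then show ?thesis using convex_differences[OF assms] by simp
  qed
next
  show "{a - b | a b. a \<in> S \<and> b \<in> T} \<subseteq> {a - b | a b. a \<in> closure S \<and> b \<in> closure T}"
    using closure_subset by blast
  show "{a - b | a b. a \<in> closure S \<and> b \<in> closure T} \<subseteq> closure {a - b | a b. a \<in> S \<and> b \<in> T}"
    using mem_closure_diff_set by blast
qed

section \<open>Firmly nonexpansive maps and the Douglas-Rachford operator\<close>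

definition firmly_nonexpansive :: "('a::real_inner \<Rightarrow> 'a) \<Rightarrow> bool" where
  "firmly_nonexpansive T \<longleftrightarrow>
     (\<forall>p q. (norm (T p - T q))\<^sup>2 + (norm ((p - T p) - (q - T q)))\<^sup>2 \<le> (norm (p - q))\<^sup>2)"

lemma firmly_nonexpansiveD:
  "firmly_nonexpansive T \<Longrightarrow> (norm (T p - T q))\<^sup>2 + (norm ((p - T p) - (q - T q)))\<^sup>2 \<le> (norm (p - q))\<^sup>2"
  by (simp add: firmly_nonexpansive_def)

lemma firmly_nonexpansive_imp_nonexpansive:
  assumes "firmly_nonexpansive T"
  shows "norm (T p - T q) \<le> norm (p - q)"
proof -
  have "(norm (T p - T q))\<^sup>2 \<le> (norm (p - q))\<^sup>2"
    using firmly_nonexpansiveD[OF assms, of p q] zero_le_power2[of "norm ((p - T p) - (q - T q))"]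
    by linarith
  then show ?thesis by (rule power2_le_imp_le) simp
qed

lemma firmly_nonexpansive_average:
  fixes N :: "'a::real_inner \<Rightarrow> 'a"
  assumes "\<And>p q. norm (N p - N q) \<le> norm (p - q)"
  shows "firmly_nonexpansive (\<lambda>z. (1/2) *\<^sub>R (z + N z))"
  unfolding firmly_nonexpansive_def
proof (intro allI)
  fix p q :: 'a
  define d e where "d = p - q" and "e = N p - N q"
  have eq1: "(1/2) *\<^sub>R (p + N p) - (1/2) *\<^sub>R (q + N q) = (1/2) *\<^sub>R (d + e)"
    by (simp add: d_def e_def algebra_simps flip: scaleR_add_left)
  have eq2: "(p - (1/2) *\<^sub>R (p + N p)) - (q - (1/2) *\<^sub>R (q + N q)) = (1/2) *\<^sub>R (d - e)"
    by (simp add: d_def e_def algebra_simps flip: scaleR_add_left)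
  have "(norm ((1/2) *\<^sub>R (d + e)))\<^sup>2 + (norm ((1/2) *\<^sub>R (d - e)))\<^sup>2
      = ((norm d)\<^sup>2 + (norm e)\<^sup>2) / 2"
    unfolding power2_norm_eq_inner
    by (simp add: inner_add_left inner_add_right inner_diff_left inner_diff_right inner_commute
        field_simps)
  also have "\<dots> \<le> (norm d)\<^sup>2"
    using assms[of p q] by (simp add: d_def e_def power_mono)
  finally show "(norm ((1/2) *\<^sub>R (p + N p) - (1/2) *\<^sub>R (q + N q)))\<^sup>2
      + (norm ((p - (1/2) *\<^sub>R (p + N p)) - (q - (1/2) *\<^sub>R (q + N q))))\<^sup>2 \<le> (norm (p - q))\<^sup>2"
    unfolding eq1 eq2 d_def[symmetric] .
qed

lemma reflected_resolvent_nonexpansive: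
  fixes A :: "'a::{real_inner,complete_space} \<Rightarrow> 'a set"
  assumes "max_monotone_op A"
  shows "norm (reflected_resolvent A p - reflected_resolvent A q) \<le> norm (p - q)"
proof -
  define a b where "a = resolvent A p - resolvent A q"
    and "b = (p - resolvent A p) - (q - resolvent A q)"
  have "0 \<le> a \<bullet> b"
    unfolding a_def b_def
    by (rule max_monotone_op_monotoneD[OF assms resolvent_mem[OF assms] resolvent_mem[OF assms]])
  moreover have "reflected_resolvent A p - reflected_resolvent A q = a - b"
    by (simp add: reflected_resolvent_def a_def b_def scaleR_2 algebra_simps)
  moreover have "p - q = a + b" by (simp add: a_def b_def)
  moreover have "(norm (a - b))\<^sup>2 = (norm (a + b))\<^sup>2 - 4 * (a \<bullet> b)"
    unfolding power2_norm_eq_inner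
    by (simp add: inner_add_left inner_add_right inner_diff_left inner_diff_right inner_commute)
  ultimately have "(norm (reflected_resolvent A p - reflected_resolvent A q))\<^sup>2 \<le> (norm (p - q))\<^sup>2"
    by simp
  then show ?thesis by (rule power2_le_imp_le) simp
qed

definition douglas_rachford :: "('a::real_inner \<Rightarrow> 'a set) \<Rightarrow> ('a \<Rightarrow> 'a set) \<Rightarrow> 'a \<Rightarrow> 'a" where
  "douglas_rachford A B z = z - resolvent A z + resolvent B (reflected_resolvent A z)"

lemma douglas_rachford_eq_average:
  "douglas_rachford A B z = (1/2) *\<^sub>R (z + reflected_resolvent B (reflected_resolvent A z))"
  by (simp add: douglas_rachford_def reflected_resolvent_def algebra_simps flip: scaleR_add_left)

lemma douglas_rachford_firmly_nonexpansive:
  fixes A B :: "'a::{real_inner,complete_space} \<Rightarrow> 'a set"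
  assumes "max_monotone_op A" "max_monotone_op B"
  shows "firmly_nonexpansive (douglas_rachford A B)"
proof -
  have "norm (reflected_resolvent B (reflected_resolvent A p) - reflected_resolvent B (reflected_resolvent A q))
      \<le> norm (p - q)" for p q
    using reflected_resolvent_nonexpansive[OF assms(2)] reflected_resolvent_nonexpansive[OF assms(1)]
    by (rule order_trans)
  then show ?thesis
    unfolding douglas_rachford_eq_average[abs_def] by (rule firmly_nonexpansive_average)
qed

lemma nonexpansive_displacement_le:
  assumes "\<And>p q. norm (T p - T q) \<le> norm (p - q)"
  shows "norm ((T ^^ n) y - (T ^^ Suc n) y) \<le> norm (y - T y)"
proof (induction n)
  case (Suc n)
  have "norm ((T ^^ Suc n) y - (T ^^ Suc (Suc n)) y) \<le> norm ((T ^^ n) y - (T ^^ Suc n) y)"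
    using assms[of "(T ^^ n) y" "(T ^^ Suc n) y"] by simp
  with Suc.IH show ?case by linarith
qed simp

lemma firmly_nonexpansive_displacement_diff_tendsto_0:
  assumes firm: "firmly_nonexpansive T"
  shows "(\<lambda>n. ((T ^^ n) x - (T ^^ Suc n) x) - ((T ^^ n) y - (T ^^ Suc n) y)) \<longlonglongrightarrow> 0"
proof -
  define d where "d n = ((T ^^ n) x - (T ^^ Suc n) x) - ((T ^^ n) y - (T ^^ Suc n) y)" for n
  define e where "e n = (norm ((T ^^ n) x - (T ^^ n) y))\<^sup>2" for n
  have step: "(norm (d n))\<^sup>2 \<le> e n - e (Suc n)" for n
    using firmly_nonexpansiveD[OF firm, of "(T ^^ n) x" "(T ^^ n) y"]
    by (simp add: d_def e_def)
  have "(\<Sum>k<n. (norm (d k))\<^sup>2) \<le> e 0" for n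
  proof -
    have "(\<Sum>k<n. (norm (d k))\<^sup>2) \<le> (\<Sum>k<n. e k - e (Suc k))" by (rule sum_mono) (rule step)
    also have "\<dots> = e 0 - e n" by (rule sum_lessThan_telescope')
    also have "\<dots> \<le> e 0" by (simp add: e_def)
    finally show ?thesis .
  qed
  then have "summable (\<lambda>k. (norm (d k))\<^sup>2)" by (intro summableI_nonneg_bounded) auto
  then have "(\<lambda>k. (norm (d k))\<^sup>2) \<longlonglongrightarrow> 0" by (rule summable_LIMSEQ_zero)
  then have "d \<longlonglongrightarrow> 0" using tendsto_of_norm_diff_sq[of d 0] by simp
  then show ?thesis unfolding d_def[abs_def] .
qed

lemma firmly_nonexpansive_displacement_norm_tendsto:
  assumes firm: "firmly_nonexpansive T"
    and v: "v \<in> closure (range (\<lambda>z. z - T z))" "\<And>z. norm v \<le> norm (z - T z)"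
  shows "(\<lambda>n. norm ((T ^^ n) x - (T ^^ Suc n) x)) \<longlonglongrightarrow> norm v"
  unfolding LIMSEQ_iff
proof (intro allI impI)
  fix e :: real assume e: "0 < e"
  \<comment> \<open>compare with the orbit of a point whose displacement is close to \<open>v\<close>\<close>
  obtain y where y: "dist (y - T y) v < e / 2"
    using v(1) e unfolding closure_approachable by (metis half_gt_zero rangeE)
  obtain N where N: "\<And>n. N \<le> n \<Longrightarrow>
      norm (((T ^^ n) x - (T ^^ Suc n) x) - ((T ^^ n) y - (T ^^ Suc n) y)) < e / 2"
    using firmly_nonexpansive_displacement_diff_tendsto_0[OF firm, of x y] e
    unfolding LIMSEQ_iff by (metis half_gt_zero diff_zero norm_minus_cancel)
  have "norm (norm ((T ^^ n) x - (T ^^ Suc n) x) - norm v) < e" if "N \<le> n" for n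
  proof -
    have "norm ((T ^^ n) y - (T ^^ Suc n) y) \<le> norm (y - T y)"
      using nonexpansive_displacement_le firmly_nonexpansive_imp_nonexpansive[OF firm] by blast
    moreover have "norm (y - T y) < norm v + e / 2"
      using y by (metis dist_norm norm_triangle_sub add.commute order_le_less_trans add_strict_left_mono)
    moreover have "norm ((T ^^ n) x - (T ^^ Suc n) x)
        \<le> norm ((T ^^ n) y - (T ^^ Suc n) y) + norm (((T ^^ n) x - (T ^^ Suc n) x) - ((T ^^ n) y - (T ^^ Suc n) y))"
      by (rule norm_triangle_sub)
    moreover have "norm v \<le> norm ((T ^^ n) x - (T ^^ Suc n) x)"
      using v(2)[of "(T ^^ n) x"] by simp
    ultimately show ?thesis using N[OF that] by simp
  qed
  then show "\<exists>N. \<forall>n\<ge>N. norm (norm ((T ^^ n) x - (T ^^ Suc n) x) - norm v) < e" by blast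
qed

section \<open>The sets \<open>dom A - dom B\<close> and \<open>ran A + ran B\<close>\<close>

definition dom_diff :: "('a::real_vector \<Rightarrow> 'a set) \<Rightarrow> ('a \<Rightarrow> 'a set) \<Rightarrow> 'a set" where
  "dom_diff A B = {a - b | a b. a \<in> dom_op A \<and> b \<in> dom_op B}"

definition ran_sum :: "('a::real_vector \<Rightarrow> 'a set) \<Rightarrow> ('a \<Rightarrow> 'a set) \<Rightarrow> 'a set" where
  "ran_sum A B = {a + b | a b. a \<in> ran_op A \<and> b \<in> ran_op B}"

lemma douglas_rachford_increments:
  fixes A B :: "'a::{real_inner,complete_space} \<Rightarrow> 'a set" and z :: 'a
  assumes maxA: "max_monotone_op A" and maxB: "max_monotone_op B"
  defines "T \<equiv> douglas_rachford A B"
  defines "p \<equiv> resolvent A z - resolvent A (T z)"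
    and "q \<equiv> resolvent (inv_op A) z - resolvent (inv_op A) (T z)"
  shows "p \<in> ran_sum A B" "q \<in> dom_diff A B" "0 \<le> p \<bullet> q" "p + q = z - T z"
proof -
  define r where "r = reflected_resolvent A z"
  have Tz: "T z = z - resolvent A z + resolvent B r"
    by (simp add: T_def douglas_rachford_def r_def)
  have q: "q = resolvent A (T z) - resolvent B r"
    by (simp add: q_def resolvent_inv_op[OF maxA] Tz)
  have "p = (T z - resolvent A (T z)) + (r - resolvent B r)"
    by (simp add: p_def Tz r_def reflected_resolvent_def scaleR_2)
  moreover have "T z - resolvent A (T z) \<in> ran_op A" "r - resolvent B r \<in> ran_op B"
    using resolvent_mem[OF maxA] resolvent_mem[OF maxB] by (auto simp: ran_op_def)
  ultimately show "p \<in> ran_sum A B" unfolding ran_sum_def by blast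
  have "resolvent A (T z) \<in> dom_op A" "resolvent B r \<in> dom_op B"
    using resolvent_mem[OF maxA] resolvent_mem[OF maxB] by (auto simp: dom_op_def)
  then show "q \<in> dom_diff A B" unfolding q dom_diff_def by blast
  show "0 \<le> p \<bullet> q"
    unfolding p_def q_def resolvent_inv_op[OF maxA]
    using max_monotone_op_monotoneD[OF maxA resolvent_mem[OF maxA] resolvent_mem[OF maxA]]
    by (simp add: algebra_simps)
  show "p + q = z - T z" by (simp add: p_def q_def resolvent_inv_op[OF maxA])
qed

lemma convex_closure_dom_diff:
  fixes A B :: "'a::{real_inner,complete_space} \<Rightarrow> 'a set"
  assumes "max_monotone_op A" "max_monotone_op B"
  shows "convex (closure (dom_diff A B))"
  unfolding dom_diff_def
  using convex_closure_diff_set[OF convex_closure_dom_op convex_closure_dom_op] assms .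

lemma convex_closure_ran_sum:
  fixes A B :: "'a::{real_inner,complete_space} \<Rightarrow> 'a set"
  assumes "max_monotone_op A" "max_monotone_op B"
  shows "convex (closure (ran_sum A B))"
  unfolding ran_sum_def
  using convex_closure_sum_set[OF convex_closure_ran_op convex_closure_ran_op] assms .

lemma dom_diff_ran_sum_nonempty:
  assumes "max_monotone_op A" "max_monotone_op B"
  shows "dom_diff A B \<noteq> {}" "ran_sum A B \<noteq> {}"
proof -
  obtain a a' where "a' \<in> A a" using max_monotone_op_graph_nonempty[OF assms(1)] .
  moreover obtain b b' where "b' \<in> B b" using max_monotone_op_graph_nonempty[OF assms(2)] .
  ultimately show "dom_diff A B \<noteq> {}" "ran_sum A B \<noteq> {}"
    unfolding dom_diff_def ran_sum_def dom_op_def ran_op_def by blast+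
qed

lemma dom_diff_variational_recession:
  fixes A B :: "'a::{real_inner,complete_space} \<Rightarrow> 'a set"
  assumes maxA: "max_monotone_op A" and maxB: "max_monotone_op B"
    and var: "\<forall>y\<in>closure (dom_diff A B). 0 \<le> (y - vD) \<bullet> vD"
  shows "r \<in> closure (ran_op A) \<Longrightarrow> r - vD \<in> closure (ran_op A)"
    and "r \<in> closure (ran_op B) \<Longrightarrow> r + vD \<in> closure (ran_op B)"
proof -
  obtain a0 a0' where a0: "a0' \<in> A a0" using max_monotone_op_graph_nonempty[OF maxA] .
  obtain b0 b0' where b0: "b0' \<in> B b0" using max_monotone_op_graph_nonempty[OF maxB] .
  have dom0: "a0 \<in> dom_op A" "b0 \<in> dom_op B" using a0 b0 by (auto simp: dom_op_def)
  have var': "vD \<bullet> vD \<le> (a - b) \<bullet> vD" if "a \<in> dom_op A" "b \<in> dom_op B" for a b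
  proof -
    have "a - b \<in> dom_diff A B" using that unfolding dom_diff_def by blast
    then have "a - b \<in> closure (dom_diff A B)" by (rule closure_subset[THEN subsetD])
    then show ?thesis using var by (auto simp: inner_diff_left dest: bspec)
  qed
  show "r - vD \<in> closure (ran_op A)" if "r \<in> closure (ran_op A)"
  proof -
    have "a \<bullet> (- vD) \<le> - (b0 \<bullet> vD) - vD \<bullet> vD" if "a \<in> dom_op A" for a
      using var'[OF that dom0(2)] by (simp add: inner_diff_left)
    then have "r + - vD \<in> closure (ran_op A)"
      by (rule max_monotone_op_closure_ran_recession[OF maxA _ that])
    then show ?thesis by simp
  qed
  show "r + vD \<in> closure (ran_op B)" if "r \<in> closure (ran_op B)"
  proof -
    have "b \<bullet> vD \<le> a0 \<bullet> vD - vD \<bullet> vD" if "b \<in> dom_op B" for b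
      using var'[OF dom0(1) that] by (simp add: inner_diff_left)
    then show ?thesis by (rule max_monotone_op_closure_ran_recession[OF maxB _ that])
  qed
qed

lemma ran_sum_variational_recession:
  fixes A B :: "'a::{real_inner,complete_space} \<Rightarrow> 'a set"
  assumes maxA: "max_monotone_op A" and maxB: "max_monotone_op B"
    and var: "\<forall>y\<in>closure (ran_sum A B). 0 \<le> (y - vR) \<bullet> vR"
    and r: "r \<in> closure (dom_op B)"
  shows "r - vR \<in> closure (dom_op B)"
proof -
  obtain a0 a0' where a0: "a0' \<in> A a0" using max_monotone_op_graph_nonempty[OF maxA] .
  have "b' \<bullet> (- vR) \<le> a0' \<bullet> vR - vR \<bullet> vR" if "b' \<in> dom_op (inv_op B)" for b'
  proof -
    have "a0' + b' \<in> ran_sum A B"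
      using that a0 unfolding ran_sum_def by (auto simp: ran_op_def)
    then have "a0' + b' \<in> closure (ran_sum A B)" by (rule closure_subset[THEN subsetD])
    then show ?thesis using var by (auto simp: inner_add_left inner_diff_left dest: bspec)
  qed
  moreover have "r \<in> closure (ran_op (inv_op B))" using r by simp
  ultimately have "r + - vR \<in> closure (ran_op (inv_op B))"
    by (rule max_monotone_op_closure_ran_recession[OF max_monotone_op_inv_op[OF maxB]])
  then show ?thesis by simp
qed

lemma closure_ran_sum_translate:
  fixes A B :: "'a::{real_inner,complete_space} \<Rightarrow> 'a set"
  assumes maxA: "max_monotone_op A" and maxB: "max_monotone_op B"
    and var: "\<forall>y\<in>closure (dom_diff A B). 0 \<le> (y - vD) \<bullet> vD"
    and y: "y \<in> closure (ran_sum A B)"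
  shows "y - vD \<in> closure (ran_sum A B)" and "y + vD \<in> closure (ran_sum A B)"
proof -
  note recA = dom_diff_variational_recession(1)[OF maxA maxB var]
    and recB = dom_diff_variational_recession(2)[OF maxA maxB var]
  have "y + - vD \<in> closure (ran_sum A B)"
  proof (rule mem_closure_translate[OF _ y])
    fix r assume "r \<in> ran_sum A B"
    then obtain a b where r: "r = a + b" "a \<in> ran_op A" "b \<in> ran_op B" by (auto simp: ran_sum_def)
    have "(a - vD) + b \<in> closure (ran_sum A B)"
      unfolding ran_sum_def using r
      by (intro mem_closure_sum_set recA) (auto simp: closure_subset[THEN subsetD])
    then show "r + - vD \<in> closure (ran_sum A B)" by (simp add: r algebra_simps)
  qed
  then show "y - vD \<in> closure (ran_sum A B)" by simp
  show "y + vD \<in> closure (ran_sum A B)"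
  proof (rule mem_closure_translate[OF _ y])
    fix r assume "r \<in> ran_sum A B"
    then obtain a b where r: "r = a + b" "a \<in> ran_op A" "b \<in> ran_op B" by (auto simp: ran_sum_def)
    have "a + (b + vD) \<in> closure (ran_sum A B)"
      unfolding ran_sum_def using r
      by (intro mem_closure_sum_set recB) (auto simp: closure_subset[THEN subsetD])
    then show "r + vD \<in> closure (ran_sum A B)" by (simp add: r algebra_simps)
  qed
qed

lemma closure_dom_diff_translate:
  fixes A B :: "'a::{real_inner,complete_space} \<Rightarrow> 'a set"
  assumes maxA: "max_monotone_op A" and maxB: "max_monotone_op B"
    and var: "\<forall>y\<in>closure (ran_sum A B). 0 \<le> (y - vR) \<bullet> vR"
    and y: "y \<in> closure (dom_diff A B)"
  shows "y + vR \<in> closure (dom_diff A B)"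
proof (rule mem_closure_translate[OF _ y])
  fix d assume "d \<in> dom_diff A B"
  then obtain a b where d: "d = a - b" "a \<in> dom_op A" "b \<in> dom_op B" by (auto simp: dom_diff_def)
  have "a - (b - vR) \<in> closure (dom_diff A B)"
    unfolding dom_diff_def using d
    by (intro mem_closure_diff_set ran_sum_variational_recession[OF maxA maxB var])
      (auto simp: closure_subset[THEN subsetD])
  then show "d + vR \<in> closure (dom_diff A B)" by (simp add: d algebra_simps)
qed

lemma proj_dom_diff_ran_sum_orthogonal:
  fixes A B :: "'a::{real_inner,complete_space} \<Rightarrow> 'a set"
  assumes maxA: "max_monotone_op A" and maxB: "max_monotone_op B"
    and vD: "vD \<in> closure (dom_diff A B)" "\<forall>y\<in>closure (dom_diff A B). 0 \<le> (y - vD) \<bullet> vD"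
    and vR: "vR \<in> closure (ran_sum A B)" "\<forall>y\<in>closure (ran_sum A B). 0 \<le> (y - vR) \<bullet> vR"
  shows "vD \<bullet> vR = 0" and "vD + vR \<in> closure (dom_diff A B)" and "vD + vR \<in> closure (ran_sum A B)"
proof -
  note shifted = closure_ran_sum_translate[OF maxA maxB vD(2) vR(1)]
  have "0 \<le> (vR - vD - vR) \<bullet> vR" "0 \<le> (vR + vD - vR) \<bullet> vR"
    using bspec[OF vR(2) shifted(1)] bspec[OF vR(2) shifted(2)] by simp_all
  then show "vD \<bullet> vR = 0" by simp
  show "vD + vR \<in> closure (ran_sum A B)" using shifted(2) by (simp add: add.commute)
  show "vD + vR \<in> closure (dom_diff A B)" by (rule closure_dom_diff_translate[OF maxA maxB vR(2) vD(1)])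
qed

lemma norm_diff_sq_le_of_variational:
  fixes x v :: "'a::real_inner"
  assumes "0 \<le> (x - v) \<bullet> v"
  shows "(norm (x - v))\<^sup>2 \<le> (norm x)\<^sup>2 - (norm v)\<^sup>2"
  using assms unfolding power2_norm_eq_inner
  by (simp add: inner_diff_left inner_diff_right inner_commute)

lemma tendsto_proj_pair_of_norm_sum:
  fixes p q :: "nat \<Rightarrow> 'a::real_inner"
  assumes S: "\<forall>y\<in>S. 0 \<le> (y - vS) \<bullet> vS" and T: "\<forall>y\<in>T. 0 \<le> (y - vT) \<bullet> vT"
    and orth: "vS \<bullet> vT = 0"
    and pq: "\<And>n. p n \<in> S" "\<And>n. q n \<in> T" "\<And>n. 0 \<le> p n \<bullet> q n"
    and lim: "(\<lambda>n. norm (p n + q n)) \<longlonglongrightarrow> l" and le: "l \<le> norm (vS + vT)"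
  shows "p \<longlonglongrightarrow> vS" and "q \<longlonglongrightarrow> vT" and "l\<^sup>2 = (norm vS)\<^sup>2 + (norm vT)\<^sup>2"
proof -
  have pythagoras: "(norm (vS + vT))\<^sup>2 = (norm vS)\<^sup>2 + (norm vT)\<^sup>2"
    using orth by (simp add: norm_add_Pythagorean orthogonal_def)
  have "0 \<le> l" using lim by (rule LIMSEQ_le_const) simp
  then have le: "l\<^sup>2 \<le> (norm vS)\<^sup>2 + (norm vT)\<^sup>2"
    using le power_mono[OF le, of 2] pythagoras by simp
  define g where "g n = (norm (p n + q n))\<^sup>2 - l\<^sup>2" for n
  have bound: "(norm (p n - vS))\<^sup>2 + (norm (q n - vT))\<^sup>2 \<le> g n" for n
  proof -
    have "(norm (p n))\<^sup>2 + (norm (q n))\<^sup>2 \<le> (norm (p n + q n))\<^sup>2"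
      using pq(3)[of n] unfolding power2_norm_eq_inner
      by (simp add: inner_add_left inner_add_right inner_commute)
    then show ?thesis
      using norm_diff_sq_le_of_variational[of "p n" vS] norm_diff_sq_le_of_variational[of "q n" vT]
        S T pq(1,2) le by (auto simp: g_def)
  qed
  have "g \<longlonglongrightarrow> l\<^sup>2 - l\<^sup>2" unfolding g_def by (intro tendsto_intros lim)
  then have g: "g \<longlonglongrightarrow> 0" by simp
  have "(norm (p n - vS))\<^sup>2 \<le> g n" "(norm (q n - vT))\<^sup>2 \<le> g n" for n
    using bound[of n] zero_le_power2[of "norm (p n - vS)"] zero_le_power2[of "norm (q n - vT)"]
    by linarith+
  note bounds = this
  have "(\<lambda>n. (norm (p n - vS))\<^sup>2) \<longlonglongrightarrow> 0"
    by (rule tendsto_sandwich[OF _ _ tendsto_const g]) (simp_all add: bounds)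
  then show p: "p \<longlonglongrightarrow> vS" by (rule tendsto_of_norm_diff_sq)
  have "(\<lambda>n. (norm (q n - vT))\<^sup>2) \<longlonglongrightarrow> 0"
    by (rule tendsto_sandwich[OF _ _ tendsto_const g]) (simp_all add: bounds)
  then show q: "q \<longlonglongrightarrow> vT" by (rule tendsto_of_norm_diff_sq)
  have "(\<lambda>n. norm (p n + q n)) \<longlonglongrightarrow> norm (vS + vT)" by (intro tendsto_intros p q)
  then have "l = norm (vS + vT)" using lim by (rule LIMSEQ_unique[rotated])
  then show "l\<^sup>2 = (norm vS)\<^sup>2 + (norm vT)\<^sup>2"
    using pythagoras by simp
qed

theorem proposition5p1:
  fixes A B :: "'a::{real_inner, complete_space} \<Rightarrow> 'a set"
    and T :: "'a \<Rightarrow> 'a" and v vD vR x :: 'a and D R :: "'a set"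
  assumes "max_monotone_op A" and "max_monotone_op B"
    and T_def: "T = (\<lambda>z. z - resolvent A z + resolvent B (reflected_resolvent A z))"
    and v_def: "v = proj (closure (range (\<lambda>z. z - T z))) 0"
    and D_def: "D = {a - b | a b. a \<in> dom_op A \<and> b \<in> dom_op B}"
    and R_def: "R = {a + b | a b. a \<in> ran_op A \<and> b \<in> ran_op B}"
    and vD_def: "vD = proj (closure D) 0"
    and vR_def: "vR = proj (closure R) 0"
    and "closure (range (\<lambda>z. z - T z)) = closure (D \<inter> R)"
    and "closure (D \<inter> R) = closure D \<inter> closure R"
  shows "((\<lambda>n. (norm (resolvent A ((T ^^ n) x) - resolvent A ((T ^^ Suc n) x)))\<^sup>2
              + (norm (resolvent (inv_op A) ((T ^^ n) x) - resolvent (inv_op A) ((T ^^ Suc n) x)))\<^sup>2)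
           \<longlonglongrightarrow> (norm v)\<^sup>2)
    \<and> (norm v)\<^sup>2 = (norm vD)\<^sup>2 + (norm vR)\<^sup>2
    \<and> ((\<lambda>n. resolvent A ((T ^^ n) x) - resolvent A ((T ^^ Suc n) x)) \<longlonglongrightarrow> vR)
    \<and> ((\<lambda>n. resolvent (inv_op A) ((T ^^ n) x) - resolvent (inv_op A) ((T ^^ Suc n) x)) \<longlonglongrightarrow> vD)"
proof -
  define p where "p = (\<lambda>n. resolvent A ((T ^^ n) x) - resolvent A ((T ^^ Suc n) x))"
  define q where "q = (\<lambda>n. resolvent (inv_op A) ((T ^^ n) x) - resolvent (inv_op A) ((T ^^ Suc n) x))"
  have T: "T = douglas_rachford A B" using T_def by (simp add: fun_eq_iff douglas_rachford_def)
  have D: "D = dom_diff A B" and R: "R = ran_sum A B"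
    by (simp_all add: D_def R_def dom_diff_def ran_sum_def)
  note cD = convex_closure_dom_diff[OF assms(1,2), folded D]
    and cR = convex_closure_ran_sum[OF assms(1,2), folded R]
  note vD = proj_closure_0[OF cD dom_diff_ran_sum_nonempty(1)[OF assms(1,2), folded D], folded vD_def]
  note vR = proj_closure_0[OF cR dom_diff_ran_sum_nonempty(2)[OF assms(1,2), folded R], folded vR_def]
  have C: "closure (range (\<lambda>z. z - T z)) = closure D \<inter> closure R" using assms(9,10) by simp
  then have "convex (closure (range (\<lambda>z. z - T z)))" "range (\<lambda>z. z - T z) \<noteq> {}"
    using cD cR by (simp_all add: convex_Int)
  note v = proj_closure_0[OF this, folded v_def]
  have orth: "vD \<bullet> vR = 0" "vD + vR \<in> closure D" "vD + vR \<in> closure R"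
    using proj_dom_diff_ran_sum_orthogonal[OF assms(1,2)] vD(1,3) vR(1,3) unfolding D R by blast+
  have pq: "p n \<in> closure R" "q n \<in> closure D" "0 \<le> p n \<bullet> q n"
    "p n + q n = (T ^^ n) x - T ((T ^^ n) x)" for n
    using douglas_rachford_increments[OF assms(1,2), of "(T ^^ n) x"] closure_subset
    by (auto simp: p_def q_def T D R)
  have "(\<lambda>n. norm (p n + q n)) \<longlonglongrightarrow> norm v"
    using firmly_nonexpansive_displacement_norm_tendsto[of T v x]
      douglas_rachford_firmly_nonexpansive[OF assms(1,2)] v(1) v(2)[OF closure_subset[THEN subsetD, OF rangeI]] by (simp add: pq(4) T)
  moreover have "norm v \<le> norm (vR + vD)" using v(2)[of "vD + vR"] orth C by (simp add: add.commute)
  ultimately have "p \<longlonglongrightarrow> vR" "q \<longlonglongrightarrow> vD" "(norm v)\<^sup>2 = (norm vR)\<^sup>2 + (norm vD)\<^sup>2"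
    using tendsto_proj_pair_of_norm_sum[of "closure R" vR "closure D" vD p q "norm v"] vR(3) vD(3) orth(1) pq
    by (simp_all add: inner_commute)
  moreover have "(\<lambda>n. (norm (p n))\<^sup>2 + (norm (q n))\<^sup>2) \<longlonglongrightarrow> (norm vR)\<^sup>2 + (norm vD)\<^sup>2"
    by (intro tendsto_intros calculation)
  ultimately show ?thesis unfolding p_def q_def by (simp add: add.commute)
qed

end
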